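(* Let $\varepsilon>0$ be a given security threshold (written $\mathsf{negl}(\lambda)$ in the paper) and let $\eta\in\mathbb{Z}^+$ satisfy $1/\eta<\varepsilon$. In the setting described in the context, if \[ \frac{2\,\lambda_{\max}(M_c'')}{\lambda_{\min}(M_o')}\;\le\;\eta, \] then both $M_f^{(0)}$ and $M_f^{(1)}$ are density matrices.
   Context: Let $d_1\ge d_2\ge 1$ be integers, $\mathcal H_M=(\mathbb C^2)^{\otimes d_1}$, $\mathcal H_{M_c}=(\mathbb C^2)^{\otimes d_2}$. For $n\ge 1$ and $k\in\{0,1\}^{2n}$ let $U_k=\bigotimes_{j=1}^{n}X^{k_{2j-1}}Z^{k_{2j}}$ with $X,Z$ the Pauli matrices. Let $M_o$ be a strictly positive definite density matrix on $\mathcal H_M$ and $M_c$ a density matrix on $\mathcal H_{M_c}$. For keys $k\in\{0,1\}^{2d_1}$, $k'\in\{0,1\}^{2d_2}$ put $M_o'=U_kM_oU_k^\dagger$, $M_c'=U_{k'}M_cU_{k'}^\dagger$, let $V|\psi\rangle=|\psi\rangle\otimes|0\rangle^{\otimes(d_1-d_2)}$ (isometry $\mathcal H_{M_c}\to\mathcal H_M$) and $M_c''=VM_c'V^\dagger$. On $\mathbb C^2\otimes\mathcal H_M$ (blocks w.r.t. the first qubit) \[ M_a^{(0)}=\begin{pmatrix}\tfrac12M_o'&0\\0&\tfrac12M_o'\end{pmatrix},\qquad M_a^{(1)}=\begin{pmatrix}\tfrac12M_o'&\tfrac1\eta M_c''\\ \tfrac1\eta (M_c'')^\dagger&\tfrac12M_o'\end{pmatrix},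 \] and $M_f^{(b)}=U_\sigma M_a^{(b)}U_\sigma^\dagger$ for a $2^{d_1+1}\times 2^{d_1+1}$ permutation matrix $U_\sigma$. $\lambda_{\min}(M_o')$ and $\lambda_{\max}(M_c'')$ denote the smallest eigenvalue of $M_o'$ and the largest eigenvalue of $M_c''$ (on their supports). *)

theory Defs
  imports "Jordan_Normal_Form.Schur_Decomposition" "Jordan_Normal_Form.Spectral_Radius"
    "HOL-Combinatorics.Permutations"
begin

definition mtrace :: "complex mat \<Rightarrow> complex" where
  "mtrace A = (\<Sum>i<dim_row A. A $$ (i,i))"

definition psd_mat :: "nat \<Rightarrow> complex mat \<Rightarrow> bool" where
  "psd_mat n A \<longleftrightarrow> A \<in> carrier_mat n n \<and> mat_adjoint A = A \<and>
     (\<forall>v \<in> carrier_vec n. 0 \<le> conjugate v \<bullet> (A *\<^sub>v v))"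

definition pd_mat :: "nat \<Rightarrow> complex mat \<Rightarrow> bool" where
  "pd_mat n A \<longleftrightarrow> A \<in> carrier_mat n n \<and> mat_adjoint A = A \<and>
     (\<forall>v \<in> carrier_vec n. v \<noteq> 0\<^sub>v n \<longrightarrow> 0 < conjugate v \<bullet> (A *\<^sub>v v))"

definition density_mat :: "nat \<Rightarrow> complex mat \<Rightarrow> bool" where
  "density_mat n A \<longleftrightarrow> psd_mat n A \<and> mtrace A = 1"

(* smallest / largest eigenvalue on the support (i.e. among nonzero eigenvalues) *)
definition lambda_min :: "complex mat \<Rightarrow> real" where
  "lambda_min A = Min {x::real. x \<noteq> 0 \<and> eigenvalue A (complex_of_real x)}"

definition lambda_max :: "complex mat \<Rightarrow> real" where
  "lambda_max A = Max {x::real. x \<noteq> 0 \<and> eigenvalue A (complex_of_real x)}"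

(* Kronecker (tensor) product; first factor = most significant index *)
definition kron :: "complex mat \<Rightarrow> complex mat \<Rightarrow> complex mat" where
  "kron A B = mat (dim_row A * dim_row B) (dim_col A * dim_col B)
     (\<lambda>(i,j). A $$ (i div dim_row B, j div dim_col B) * B $$ (i mod dim_row B, j mod dim_col B))"

definition pauli_X :: "complex mat" where
  "pauli_X = mat 2 2 (\<lambda>(i,j). if i \<noteq> j then 1 else 0)"

definition pauli_Z :: "complex mat" where
  "pauli_Z = mat 2 2 (\<lambda>(i,j). if i = j then (if i = 0 then 1 else -1) else 0)"

fun pauli_op :: "bool list \<Rightarrow> complex mat" where
  "pauli_op [] = 1\<^sub>m 1"
| "pauli_op [a] = 1\<^sub>m 1"
| "pauli_op (a # b # ks) =
     kron ((if a then pauli_X else 1\<^sub>m 2) * (if b then pauli_Z else 1\<^sub>m 2)) (pauli_op ks)"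

definition ket0 :: "nat \<Rightarrow> complex mat" where
  "ket0 m = mat (2^m) 1 (\<lambda>(i,j). if i = 0 then 1 else 0)"

definition iso_V :: "nat \<Rightarrow> nat \<Rightarrow> complex mat" where
  "iso_V d1 d2 = kron (1\<^sub>m (2^d2)) (ket0 (d1 - d2))"

(* permutation matrix: U_sigma e_j = e_{sigma j} *)
definition perm_mat :: "nat \<Rightarrow> (nat \<Rightarrow> nat) \<Rightarrow> complex mat" where
  "perm_mat N \<sigma> = mat N N (\<lambda>(i,j). if i = \<sigma> j then 1 else 0)"

end

theory Submission
  imports Defs "HOL-Analysis.Function_Topology" "HOL-Analysis.Topology_Euclidean_Space"
begin

(* Conjugating by the Pauli operators, by the permutation matrix and by the isometry V preserves
   positivity, and conjugating by the first two also preserves the trace and positive definiteness.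
   So it suffices that the block matrices [[Mo'/2, C], [C^*, Mo'/2]] are positive semidefinite,
   for C = 0 and for C = Mc''/eta; their trace is tr Mo' = 1.  For a vector (x, y) the quadratic
   form of such a block matrix equals
     (x + y)^* C (x + y) + (x^* Mo' x / 2 - x^* C x) + (y^* Mo' y / 2 - y^* C y),
   which is nonnegative once x^* C x <= x^* Mo' x / 2 for all x.  For C = Mc''/eta this follows
   from the hypothesis on eta and the Rayleigh bounds
     lambda_min(Mo') |x|^2 <= x^* Mo' x   and   x^* Mc'' x <= lambda_max(Mc'') |x|^2,
   which come from minimising the Rayleigh quotient over the compact unit sphere: the minimiser
   is an eigenvector and the minimum its eigenvalue. *)

(* Topology_Euclidean_Space, needed for the compactness of complex discs, brings Cartesian
   vectors whose names and notation clash with those of Jordan_Normal_Form. *)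
no_notation vec_nth (infixl "$" 90)
no_notation inner (infix "\<bullet>" 70)
hide_type (open) Finite_Cartesian_Product.vec
hide_const (open) Finite_Cartesian_Product.vec

abbreviation sq_norm :: "complex vec \<Rightarrow> real" where
  "sq_norm v \<equiv> Re (conjugate v \<bullet> v)"

abbreviation quad_form :: "complex mat \<Rightarrow> complex vec \<Rightarrow> real" where
  "quad_form A v \<equiv> Re (conjugate v \<bullet> (A *\<^sub>v v))"

section \<open>Adjoints and sesquilinear forms\<close>

lemma dim_mat_adjoint [simp]:
  "dim_row (mat_adjoint A) = dim_col A" "dim_col (mat_adjoint A) = dim_row A"
  unfolding mat_adjoint_def by simp_all

lemma index_mat_adjoint [simp]:
  "i < dim_col A \<Longrightarrow> j < dim_row A \<Longrightarrow> mat_adjoint A $$ (i, j) = cnj (A $$ (j, i))"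
  unfolding mat_adjoint_def mat_of_rows_def by simp

lemma mat_adjoint_carrier [simp]: "A \<in> carrier_mat n m \<Longrightarrow> mat_adjoint A \<in> carrier_mat m n"
  by (intro carrier_matI) (simp_all add: carrier_matD)

lemma mat_adjoint_mat_adjoint [simp]: "mat_adjoint (mat_adjoint (A :: complex mat)) = A"
  by (rule eq_matI) simp_all

lemma mat_adjoint_smult: "mat_adjoint (c \<cdot>\<^sub>m A) = cnj c \<cdot>\<^sub>m mat_adjoint (A :: complex mat)"
  by (rule eq_matI) simp_all

lemma mat_adjoint_zero [simp]: "mat_adjoint (0\<^sub>m n m :: complex mat) = 0\<^sub>m m n"
  by (rule eq_matI) simp_all

lemma mat_adjoint_one [simp]: "mat_adjoint (1\<^sub>m n :: complex mat) = 1\<^sub>m n"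
  by (rule eq_matI) simp_all

lemma mat_adjoint_mult:
  assumes "A \<in> carrier_mat n m" and "B \<in> carrier_mat m p"
  shows "mat_adjoint (A * B) = mat_adjoint B * mat_adjoint (A :: complex mat)"
  using assms by (intro eq_matI) (auto simp: scalar_prod_def cnj_sum mult.commute)

lemma mat_adjoint_four_block_mat:
  assumes "A \<in> carrier_mat n n" "B \<in> carrier_mat n n" "C \<in> carrier_mat n n" "D \<in> carrier_mat n n"
  shows "mat_adjoint (four_block_mat A B C (D :: complex mat)) =
    four_block_mat (mat_adjoint A) (mat_adjoint C) (mat_adjoint B) (mat_adjoint D)"
proof -
  have dims: "dim_row A = n" "dim_col A = n" "dim_row B = n" "dim_col B = n"
    "dim_row C = n" "dim_col C = n" "dim_row D = n" "dim_col D = n"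
    using assms by auto
  show ?thesis
  proof (rule eq_matI)
    fix i j
    assume "i < dim_row (four_block_mat (mat_adjoint A) (mat_adjoint C) (mat_adjoint B) (mat_adjoint D))"
      and "j < dim_col (four_block_mat (mat_adjoint A) (mat_adjoint C) (mat_adjoint B) (mat_adjoint D))"
    then have i: "i < n + n" and j: "j < n + n"
      using dims by auto
    have "mat_adjoint (four_block_mat A B C D) $$ (i, j) = cnj (four_block_mat A B C D $$ (j, i))"
      using i j dims by simp
    then show "mat_adjoint (four_block_mat A B C D) $$ (i, j) =
        four_block_mat (mat_adjoint A) (mat_adjoint C) (mat_adjoint B) (mat_adjoint D) $$ (i, j)"
      using i j dims by (cases "i < n"; cases "j < n") simp_all
  qed (simp_all add: dims)
qed

lemma smult_mat_mult_vec:
  assumes "A \<in> carrier_mat n m" and "v \<in> carrier_vec m"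
  shows "(c \<cdot>\<^sub>m A) *\<^sub>v v = c \<cdot>\<^sub>v (A *\<^sub>v (v :: complex vec))"
proof (rule eq_vecI)
  fix i assume "i < dim_vec (c \<cdot>\<^sub>v (A *\<^sub>v v))"
  with assms show "((c \<cdot>\<^sub>m A) *\<^sub>v v) $ i = (c \<cdot>\<^sub>v (A *\<^sub>v v)) $ i"
    by (simp add: scalar_prod_def sum_distrib_left mult.assoc)
qed (use assms in simp)

lemma cscalar_prod_sum:
  assumes "v \<in> carrier_vec n" "w \<in> carrier_vec n"
  shows "conjugate v \<bullet> w = (\<Sum>i<n. cnj (v $ i) * (w $ i :: complex))"
  using assms by (simp add: scalar_prod_def atLeast0LessThan)

lemma cscalar_prod_mat_vec_sum:
  assumes "A \<in> carrier_mat n m" "u \<in> carrier_vec n" "w \<in> carrier_vec m"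
  shows "conjugate u \<bullet> (A *\<^sub>v w) = (\<Sum>i<n. cnj (u $ i) * (\<Sum>j<m. A $$ (i, j) * (w $ j :: complex)))"
  using assms by (simp add: scalar_prod_def atLeast0LessThan)

lemma cscalar_prod_mat_adjoint:
  assumes A: "A \<in> carrier_mat n m" and u: "u \<in> carrier_vec n" and w: "w \<in> carrier_vec m"
  shows "conjugate u \<bullet> (A *\<^sub>v w) = conjugate (mat_adjoint A *\<^sub>v u) \<bullet> (w :: complex vec)"
proof -
  have "conjugate u \<bullet> (A *\<^sub>v w) = (\<Sum>i<n. \<Sum>j<m. cnj (u $ i) * A $$ (i, j) * w $ j)"
    unfolding cscalar_prod_mat_vec_sum[OF A u w] by (simp add: sum_distrib_left mult.assoc)
  also have "\<dots> = (\<Sum>j<m. \<Sum>i<n. cnj (u $ i) * A $$ (i, j) * w $ j)"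
    by (rule sum.swap)
  also have "\<dots> = (\<Sum>j<m. cnj ((mat_adjoint A *\<^sub>v u) $ j) * w $ j)"
  proof (rule sum.cong[OF refl])
    fix j assume "j \<in> {..<m}"
    then have "(mat_adjoint A *\<^sub>v u) $ j = (\<Sum>i<n. cnj (A $$ (i, j)) * u $ i)"
      using A u by (simp add: scalar_prod_def atLeast0LessThan)
    then show "(\<Sum>i<n. cnj (u $ i) * A $$ (i, j) * w $ j) = cnj ((mat_adjoint A *\<^sub>v u) $ j) * w $ j"
      by (simp add: cnj_sum sum_distrib_right sum_distrib_left mult_ac)
  qed
  also have "\<dots> = conjugate (mat_adjoint A *\<^sub>v u) \<bullet> w"
    using cscalar_prod_sum[OF mult_mat_vec_carrier[OF mat_adjoint_carrier[OF A] u] w] by simp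
  finally show ?thesis .
qed

lemma cnj_cscalar_prod:
  assumes "v \<in> carrier_vec n" "w \<in> carrier_vec n"
  shows "cnj (conjugate v \<bullet> w) = conjugate w \<bullet> (v :: complex vec)"
  unfolding cscalar_prod_sum[OF assms] cscalar_prod_sum[OF assms(2,1)]
  by (simp add: cnj_sum mult.commute)

lemma cscalar_prod_add_mat_vec_add:
  assumes A: "A \<in> carrier_mat n n" and x: "x \<in> carrier_vec n" and y: "y \<in> carrier_vec n"
  shows "conjugate (x + y) \<bullet> (A *\<^sub>v (x + y)) =
    conjugate x \<bullet> (A *\<^sub>v x) + conjugate x \<bullet> (A *\<^sub>v y)
    + conjugate y \<bullet> (A *\<^sub>v x) + conjugate y \<bullet> (A *\<^sub>v (y :: complex vec))"
proof -
  have Ax: "A *\<^sub>v x \<in> carrier_vec n" and Ay: "A *\<^sub>v y \<in> carrier_vec n"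
    using A x y by simp_all
  have cx: "conjugate x \<in> carrier_vec n" and cy: "conjugate y \<in> carrier_vec n"
    using x y by simp_all
  have "conjugate (x + y) \<bullet> (A *\<^sub>v (x + y)) = (conjugate x + conjugate y) \<bullet> (A *\<^sub>v x + A *\<^sub>v y)"
    using conjugate_add_vec[OF x y] mult_add_distrib_mat_vec[OF A x y] by simp
  also have "\<dots> = conjugate x \<bullet> (A *\<^sub>v x + A *\<^sub>v y) + conjugate y \<bullet> (A *\<^sub>v x + A *\<^sub>v y)"
    by (rule add_scalar_prod_distrib[OF cx cy]) (use Ax Ay in simp)
  also have "\<dots> = conjugate x \<bullet> (A *\<^sub>v x) + conjugate x \<bullet> (A *\<^sub>v y)
      + conjugate y \<bullet> (A *\<^sub>v x) + conjugate y \<bullet> (A *\<^sub>v y)"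
    unfolding scalar_prod_add_distrib[OF cx Ax Ay] scalar_prod_add_distrib[OF cy Ax Ay] by simp
  finally show ?thesis .
qed

lemma cscalar_prod_self_ge_0:
  assumes "v \<in> carrier_vec n"
  shows "0 \<le> conjugate v \<bullet> (v :: complex vec)"
  using conjugate_square_ge_0_vec[of v] conjugate_vec_sprod_comm[OF assms assms] by simp

lemma cscalar_prod_self_eq_0_iff:
  assumes "v \<in> carrier_vec n"
  shows "conjugate v \<bullet> v = 0 \<longleftrightarrow> v = (0\<^sub>v n :: complex vec)"
  using conjugate_square_eq_0_vec[OF assms] conjugate_vec_sprod_comm[OF assms assms] by simp

lemma sq_norm_ge_0: "v \<in> carrier_vec n \<Longrightarrow> 0 \<le> sq_norm v"
  using cscalar_prod_self_ge_0 by (simp add: less_eq_complex_def)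

lemma sq_norm_eq_0_iff:
  assumes v: "v \<in> carrier_vec n"
  shows "sq_norm v = 0 \<longleftrightarrow> v = 0\<^sub>v n"
proof
  assume "sq_norm v = 0"
  moreover have "Im (conjugate v \<bullet> v) = 0"
    using cscalar_prod_self_ge_0[OF v] by (simp add: less_eq_complex_def)
  ultimately have "conjugate v \<bullet> v = 0"
    by (simp add: complex_eq_iff)
  then show "v = 0\<^sub>v n"
    using cscalar_prod_self_eq_0_iff[OF v] by simp
qed simp

lemma sq_norm_sum:
  assumes v: "v \<in> carrier_vec n"
  shows "sq_norm v = (\<Sum>i<n. (cmod (v $ i))\<^sup>2)"
proof -
  have "conjugate v \<bullet> v = complex_of_real (\<Sum>i<n. (cmod (v $ i))\<^sup>2)"
    unfolding cscalar_prod_sum[OF v v] of_real_sum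
    by (intro sum.cong refl) (metis complex_norm_square mult.commute)
  then show ?thesis
    by simp
qed

lemma cscalar_prod_smult_real:
  assumes "v \<in> carrier_vec n" and "w \<in> carrier_vec n"
  shows "conjugate (complex_of_real t \<cdot>\<^sub>v v) \<bullet> (complex_of_real t \<cdot>\<^sub>v w) =
    complex_of_real (t\<^sup>2) * (conjugate v \<bullet> w)"
  using assms by (simp add: conjugate_smult_vec power2_eq_square)

lemma quad_form_smult_real:
  assumes A: "A \<in> carrier_mat n n" and v: "v \<in> carrier_vec n"
  shows "quad_form A (complex_of_real t \<cdot>\<^sub>v v) = t\<^sup>2 * quad_form A v"
  unfolding mult_mat_vec[OF A v] cscalar_prod_smult_real[OF v mult_mat_vec_carrier[OF A v]] by simp

lemma sq_norm_smult_real: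
  assumes v: "v \<in> carrier_vec n"
  shows "sq_norm (complex_of_real t \<cdot>\<^sub>v v) = t\<^sup>2 * sq_norm v"
  unfolding cscalar_prod_smult_real[OF v v] by simp

lemma quad_form_smult_mat_real:
  assumes A: "A \<in> carrier_mat n n" and v: "v \<in> carrier_vec n"
  shows "quad_form (complex_of_real c \<cdot>\<^sub>m A) v = c * quad_form A v"
  using A v by (simp add: smult_mat_mult_vec[OF A v] carrier_matD)

lemma hermitian_quad_form_real:
  assumes A: "A \<in> carrier_mat n n" and herm: "mat_adjoint A = A" and v: "v \<in> carrier_vec n"
  shows "Im (conjugate v \<bullet> (A *\<^sub>v v)) = 0"
proof -
  have "conjugate v \<bullet> (A *\<^sub>v v) = conjugate (A *\<^sub>v v) \<bullet> v"
    using cscalar_prod_mat_adjoint[OF A v v] herm by simp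
  also have "\<dots> = cnj (conjugate v \<bullet> (A *\<^sub>v v))"
    using cnj_cscalar_prod[OF v mult_mat_vec_carrier[OF A v]] by simp
  finally show ?thesis
    by (metis Reals_cnj_iff complex_is_Real_iff)
qed

lemma psd_mat_iff_quad_form:
  "psd_mat n A \<longleftrightarrow>
    A \<in> carrier_mat n n \<and> mat_adjoint A = A \<and> (\<forall>v \<in> carrier_vec n. 0 \<le> quad_form A v)"
  unfolding psd_mat_def less_eq_complex_def using hermitian_quad_form_real by auto

lemma psd_mat_zero: "psd_mat n (0\<^sub>m n n)"
  unfolding psd_mat_iff_quad_form
proof (intro conjI ballI)
  fix v :: "complex vec" assume v: "v \<in> carrier_vec n"
  show "0 \<le> quad_form (0\<^sub>m n n) v"
    unfolding cscalar_prod_mat_vec_sum[OF zero_carrier_mat v v] by simp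
qed simp_all

lemma psd_mat_smult:
  assumes A: "psd_mat n A" and c: "0 \<le> c"
  shows "psd_mat n (complex_of_real c \<cdot>\<^sub>m A)"
proof -
  have An: "A \<in> carrier_mat n n"
    using A unfolding psd_mat_def by blast
  have "quad_form (complex_of_real c \<cdot>\<^sub>m A) v = c * quad_form A v" if "v \<in> carrier_vec n" for v
    by (rule quad_form_smult_mat_real[OF An that])
  then show ?thesis
    using A c unfolding psd_mat_iff_quad_form by (simp add: mat_adjoint_smult)
qed

section \<open>Congruence by isometries\<close>

lemma cscalar_prod_congruence:
  assumes P: "P \<in> carrier_mat n m" and A: "A \<in> carrier_mat m m" and v: "v \<in> carrier_vec n"
  shows "conjugate v \<bullet> ((P * A * mat_adjoint P) *\<^sub>v v) =
    conjugate (mat_adjoint P *\<^sub>v v) \<bullet> (A *\<^sub>v (mat_adjoint P *\<^sub>v (v :: complex vec)))"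
proof -
  have P': "mat_adjoint P \<in> carrier_mat m n"
    using P by simp
  have w: "mat_adjoint P *\<^sub>v v \<in> carrier_vec m"
    using P' v by simp
  have "(P * A * mat_adjoint P) *\<^sub>v v = P *\<^sub>v (A *\<^sub>v (mat_adjoint P *\<^sub>v v))"
    using assoc_mult_mat_vec[OF mult_carrier_mat[OF P A] P' v] assoc_mult_mat_vec[OF P A w] by simp
  then show ?thesis
    using cscalar_prod_mat_adjoint[OF P v mult_mat_vec_carrier[OF A w]] by simp
qed

lemma hermitian_congruence:
  assumes P: "P \<in> carrier_mat n m" and A: "A \<in> carrier_mat m m" and herm: "mat_adjoint A = A"
  shows "mat_adjoint (P * A * mat_adjoint P) = P * A * mat_adjoint (P :: complex mat)"
proof -
  have P': "mat_adjoint P \<in> carrier_mat m n"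
    using P by simp
  have "mat_adjoint (P * A * mat_adjoint P) = P * mat_adjoint (P * A)"
    using mat_adjoint_mult[OF mult_carrier_mat[OF P A] P'] by simp
  also have "\<dots> = P * (A * mat_adjoint P)"
    using mat_adjoint_mult[OF P A] herm by simp
  also have "\<dots> = P * A * mat_adjoint P"
    using assoc_mult_mat[OF P A P'] by simp
  finally show ?thesis .
qed

lemma psd_mat_congruence:
  assumes A: "psd_mat m A" and P: "P \<in> carrier_mat n m"
  shows "psd_mat n (P * A * mat_adjoint P)"
  unfolding psd_mat_iff_quad_form
proof (intro conjI ballI)
  have Am: "A \<in> carrier_mat m m" and herm: "mat_adjoint A = A"
    using A unfolding psd_mat_def by auto
  show "P * A * mat_adjoint P \<in> carrier_mat n n"
    using mult_carrier_mat[OF mult_carrier_mat[OF P Am] mat_adjoint_carrier[OF P]] .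
  show "mat_adjoint (P * A * mat_adjoint P) = P * A * mat_adjoint P"
    by (rule hermitian_congruence[OF P Am herm])
  fix v :: "complex vec" assume v: "v \<in> carrier_vec n"
  have "mat_adjoint P *\<^sub>v v \<in> carrier_vec m"
    using mult_mat_vec_carrier[OF mat_adjoint_carrier[OF P] v] .
  then show "0 \<le> quad_form (P * A * mat_adjoint P) v"
    using A unfolding cscalar_prod_congruence[OF P Am v] psd_mat_iff_quad_form by blast
qed

definition isometry_mat :: "nat \<Rightarrow> nat \<Rightarrow> complex mat \<Rightarrow> bool" where
  "isometry_mat n m P \<longleftrightarrow> P \<in> carrier_mat n m \<and> mat_adjoint P * P = 1\<^sub>m m"

lemma pd_mat_congruence:
  assumes A: "pd_mat n A" and P: "isometry_mat n n P"
  shows "pd_mat n (P * A * mat_adjoint P)"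
  unfolding pd_mat_def
proof (intro conjI ballI impI)
  have An: "A \<in> carrier_mat n n" and herm: "mat_adjoint A = A"
    and pos: "\<And>v. v \<in> carrier_vec n \<Longrightarrow> v \<noteq> 0\<^sub>v n \<Longrightarrow> 0 < conjugate v \<bullet> (A *\<^sub>v v)"
    using A unfolding pd_mat_def by auto
  have Pn: "P \<in> carrier_mat n n" and P': "mat_adjoint P \<in> carrier_mat n n"
    using P unfolding isometry_mat_def by auto
  have PP': "P * mat_adjoint P = 1\<^sub>m n"
    using mat_mult_left_right_inverse[OF P' Pn] P unfolding isometry_mat_def by blast
  show "P * A * mat_adjoint P \<in> carrier_mat n n"
    using mult_carrier_mat[OF mult_carrier_mat[OF Pn An] P'] .
  show "mat_adjoint (P * A * mat_adjoint P) = P * A * mat_adjoint P"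
    by (rule hermitian_congruence[OF Pn An herm])
  fix v :: "complex vec" assume v: "v \<in> carrier_vec n" and v0: "v \<noteq> 0\<^sub>v n"
  have w: "mat_adjoint P *\<^sub>v v \<in> carrier_vec n"
    using mult_mat_vec_carrier[OF P' v] .
  have "P *\<^sub>v (mat_adjoint P *\<^sub>v v) = v"
    using assoc_mult_mat_vec[OF Pn P' v] PP' v by simp
  moreover have "P *\<^sub>v 0\<^sub>v n = 0\<^sub>v n"
    using Pn by (intro eq_vecI) (simp_all add: carrier_matD)
  ultimately have "mat_adjoint P *\<^sub>v v \<noteq> 0\<^sub>v n"
    using v0 by metis
  then show "0 < conjugate v \<bullet> ((P * A * mat_adjoint P) *\<^sub>v v)"
    unfolding cscalar_prod_congruence[OF Pn An v] using pos[OF w] by simp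
qed

lemma mtrace_mult_comm:
  assumes A: "A \<in> carrier_mat n m" and B: "B \<in> carrier_mat m n"
  shows "mtrace (A * B) = mtrace (B * A)"
proof -
  have "mtrace (A * B) = (\<Sum>i<n. \<Sum>j<m. A $$ (i, j) * B $$ (j, i))"
    using A B unfolding mtrace_def by (simp add: scalar_prod_def atLeast0LessThan)
  also have "\<dots> = (\<Sum>j<m. \<Sum>i<n. B $$ (j, i) * A $$ (i, j))"
    by (subst sum.swap) (simp add: mult.commute)
  also have "\<dots> = mtrace (B * A)"
    using A B unfolding mtrace_def by (simp add: scalar_prod_def atLeast0LessThan)
  finally show ?thesis .
qed

lemma mtrace_congruence:
  assumes P: "isometry_mat n m P" and A: "A \<in> carrier_mat m m"
  shows "mtrace (P * A * mat_adjoint P) = mtrace A"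
proof -
  have Pnm: "P \<in> carrier_mat n m" and P'P: "mat_adjoint P * P = 1\<^sub>m m"
    using P unfolding isometry_mat_def by auto
  have P': "mat_adjoint P \<in> carrier_mat m n"
    using Pnm by simp
  have "mtrace (P * A * mat_adjoint P) = mtrace (P * (A * mat_adjoint P))"
    using assoc_mult_mat[OF Pnm A P'] by simp
  also have "\<dots> = mtrace (A * mat_adjoint P * P)"
    by (rule mtrace_mult_comm[OF Pnm mult_carrier_mat[OF A P']])
  also have "\<dots> = mtrace A"
    using assoc_mult_mat[OF A P' Pnm] P'P A by simp
  finally show ?thesis .
qed

lemma density_mat_congruence:
  assumes A: "density_mat m A" and P: "isometry_mat n m P"
  shows "density_mat n (P * A * mat_adjoint P)"
proof -
  have "psd_mat m A" and "A \<in> carrier_mat m m"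
    using A unfolding density_mat_def psd_mat_def by auto
  with A P show ?thesis
    unfolding density_mat_def isometry_mat_def
    using psd_mat_congruence mtrace_congruence[OF P] by auto
qed

section \<open>Extremal eigenvalues of Hermitian matrices\<close>

lemma linear_coeff_eq_0_of_quadratic_nonneg:
  fixes s a :: real
  assumes s0: "0 \<le> s" and a0: "0 \<le> a" and quadratic: "\<And>t. 0 \<le> 2 * t * s + t\<^sup>2 * a"
  shows "s = 0"
proof (rule ccontr)
  assume "s \<noteq> 0"
  with s0 have s_pos: "0 < s" by simp
  define u where "u = s / (a + 1)"
  have u_pos: "0 < u"
    unfolding u_def using s_pos a0 by simp
  have "u * a = s * (a / (a + 1))"
    unfolding u_def by simp
  also have "\<dots> \<le> s * 1"
    using s_pos a0 by (intro mult_left_mono) auto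
  finally have "u * a \<le> s" by simp
  then have "2 * (- u) * s + (- u)\<^sup>2 * a < 0"
    using u_pos s_pos by (simp add: power2_eq_square algebra_simps mult_pos_neg)
  with quadratic[of "- u"] show False by simp
qed

(* For real t, 0 <= q(x + t Cx) = 2 t |Cx|^2 + t^2 q(Cx); this forces Cx = 0. *)
lemma psd_mat_kernel_of_quad_form_eq_0:
  assumes psd: "psd_mat n C" and x: "x \<in> carrier_vec n" and zero: "quad_form C x = 0"
  shows "C *\<^sub>v x = 0\<^sub>v n"
proof -
  have C: "C \<in> carrier_mat n n" and herm: "mat_adjoint C = C"
    and pos: "\<And>v. v \<in> carrier_vec n \<Longrightarrow> 0 \<le> quad_form C v"
    using psd unfolding psd_mat_iff_quad_form by auto
  define y where "y = C *\<^sub>v x"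
  have y: "y \<in> carrier_vec n"
    unfolding y_def using mult_mat_vec_carrier[OF C x] .
  define s where "s = sq_norm y"
  define a where "a = quad_form C y"
  have xCy: "conjugate x \<bullet> (C *\<^sub>v y) = conjugate y \<bullet> y"
    using cscalar_prod_mat_adjoint[OF C x y] herm unfolding y_def by simp
  have quadratic: "0 \<le> 2 * t * s + t\<^sup>2 * a" for t :: real
  proof -
    have ty: "complex_of_real t \<cdot>\<^sub>v y \<in> carrier_vec n"
      using y by simp
    have Cy: "C *\<^sub>v y \<in> carrier_vec n"
      using mult_mat_vec_carrier[OF C y] .
    have "0 \<le> quad_form C (x + complex_of_real t \<cdot>\<^sub>v y)"
      using pos x ty by simp
    also have "\<dots> = quad_form C x + t * Re (conjugate x \<bullet> (C *\<^sub>v y)) + t * Re (conjugate y \<bullet> y)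
        + t\<^sup>2 * quad_form C y"
      unfolding cscalar_prod_add_mat_vec_add[OF C x ty] quad_form_smult_real[OF C y, symmetric]
      using x y Cy
      by (simp add: mult_mat_vec[OF C y] conjugate_smult_vec y_def[symmetric]
          carrier_matD[OF C] carrier_vecD[OF x] carrier_vecD[OF y])
    also have "\<dots> = 2 * t * s + t\<^sup>2 * a"
      unfolding xCy zero s_def a_def by simp
    finally show ?thesis .
  qed
  have s0: "0 \<le> s" and a0: "0 \<le> a"
    unfolding s_def a_def using sq_norm_ge_0[OF y] pos[OF y] by auto
  have "s = 0"
    by (rule linear_coeff_eq_0_of_quadratic_nonneg[OF s0 a0 quadratic])
  then show ?thesis
    using sq_norm_eq_0_iff[OF y] unfolding s_def y_def by simp
qed

lemma continuous_on_coordinate [continuous_intros]: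
  "continuous_on S (\<lambda>f :: nat \<Rightarrow> 'b :: topological_space. f i)"
  by (rule continuous_on_subset[OF continuous_on_product_coordinates]) simp

lemma compact_PiE_cball:
  "compact (PiE UNIV (\<lambda>i :: nat. if i < n then cball (0 :: complex) 1 else {0}))"
proof -
  have "compactin (product_topology (\<lambda>i. euclidean) UNIV)
      (PiE UNIV (\<lambda>i :: nat. if i < n then cball (0 :: complex) 1 else {0}))"
    by (subst compactin_PiE) (auto simp: compactin_euclidean_iff compact_cball)
  then show ?thesis
    unfolding euclidean_product_topology compactin_euclidean_iff .
qed

lemma cmod_le_1_of_sq_norm_eq_1:
  assumes w: "w \<in> carrier_vec n" and w_norm: "sq_norm w = 1" and i: "i < n"
  shows "cmod (w $ i) \<le> 1"
proof -
  have "(cmod (w $ i))\<^sup>2 \<le> (\<Sum>j<n. (cmod (w $ j))\<^sup>2)"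
    by (rule member_le_sum) (use i in auto)
  then show ?thesis
    using w_norm abs_square_le_1[of "cmod (w $ i)"] unfolding sq_norm_sum[OF w] by simp
qed

(* A vector is identified with its coordinate function nat => complex, which vanishes from n on;
   the unit sphere is then a closed subset of a compact product of discs. *)
lemma quad_form_attains_min_on_unit_sphere:
  assumes A: "A \<in> carrier_mat n n" and n: "0 < n"
  shows "\<exists>x \<in> carrier_vec n. sq_norm x = 1 \<and>
    (\<forall>w \<in> carrier_vec n. sq_norm w = 1 \<longrightarrow> quad_form A x \<le> quad_form A w)"
proof -
  define K where "K = PiE UNIV (\<lambda>i :: nat. if i < n then cball (0 :: complex) 1 else {0})"
  define S where "S = K \<inter> {f. (\<Sum>i<n. (cmod (f i))\<^sup>2) = 1}"
  define g where "g f = quad_form A (vec n f)" for f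
  have g_sum: "g f = Re (\<Sum>i<n. cnj (f i) * (\<Sum>j<n. A $$ (i, j) * f j))" for f
    unfolding g_def cscalar_prod_mat_vec_sum[OF A vec_carrier vec_carrier] by simp
  have "compact S"
    unfolding S_def K_def
    by (intro compact_Int_closed compact_PiE_cball closed_Collect_eq continuous_on_const continuous_intros)
  moreover have "S \<noteq> {}"
  proof -
    define e where "e = (\<lambda>i :: nat. if i = 0 then (1 :: complex) else 0)"
    have "(\<Sum>i<n. (cmod (e i))\<^sup>2) = (\<Sum>i<n. if i = 0 then 1 else 0)"
      unfolding e_def by (intro sum.cong refl) simp
    with n have "e \<in> S"
      unfolding S_def K_def e_def by auto
    then show ?thesis by blast
  qed
  moreover have "continuous_on S g"
    unfolding g_sum by (intro continuous_intros)
  ultimately obtain f0 where f0: "f0 \<in> S" and f0_min: "\<And>f. f \<in> S \<Longrightarrow> g f0 \<le> g f"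
    using continuous_attains_inf by metis
  have "quad_form A (vec n f0) \<le> quad_form A w" if w: "w \<in> carrier_vec n" "sq_norm w = 1" for w
  proof -
    define f where "f i = (if i < n then w $ i else 0)" for i
    have "f \<in> S"
      using cmod_le_1_of_sq_norm_eq_1[OF w] w unfolding S_def K_def sq_norm_sum[OF w(1)] f_def by auto
    moreover have "vec n f = w"
      using w unfolding f_def by (intro eq_vecI) auto
    ultimately show ?thesis
      using f0_min unfolding g_def by metis
  qed
  moreover have "sq_norm (vec n f0) = 1"
    using f0 unfolding S_def sq_norm_sum[OF vec_carrier] by simp
  ultimately show ?thesis
    using vec_carrier by blast
qed

lemma quad_form_lower_bound_of_unit_sphere:
  assumes A: "A \<in> carrier_mat n n"
    and unit: "\<And>w. w \<in> carrier_vec n \<Longrightarrow> sq_norm w = 1 \<Longrightarrow> \<mu> \<le> quad_form A w"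
    and v: "v \<in> carrier_vec n"
  shows "\<mu> * sq_norm v \<le> quad_form A v"
proof (cases "v = 0\<^sub>v n")
  case True
  then show ?thesis
    using scalar_prod_left_zero[OF mult_mat_vec_carrier[OF A v]] by simp
next
  case False
  define s where "s = sq_norm v"
  have s_pos: "0 < s"
    using sq_norm_ge_0[OF v] sq_norm_eq_0_iff[OF v] False unfolding s_def by linarith
  define w where "w = complex_of_real (1 / sqrt s) \<cdot>\<^sub>v v"
  have "w \<in> carrier_vec n"
    unfolding w_def using v by simp
  moreover have "sq_norm w = 1"
    unfolding w_def sq_norm_smult_real[OF v] s_def[symmetric] using s_pos by (simp add: power_divide)
  ultimately have "\<mu> \<le> quad_form A w"
    by (rule unit)
  also have "\<dots> = quad_form A v / s"
    unfolding w_def quad_form_smult_real[OF A v] using s_pos by (simp add: power_divide)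
  finally show ?thesis
    using s_pos unfolding s_def by (simp add: pos_le_divide_eq)
qed

lemma minus_smult_one_mult_vec:
  assumes A: "A \<in> carrier_mat n n" and v: "v \<in> carrier_vec n"
  shows "(A - c \<cdot>\<^sub>m 1\<^sub>m n) *\<^sub>v v = A *\<^sub>v v - c \<cdot>\<^sub>v (v :: complex vec)"
  unfolding minus_mult_distrib_mat_vec[OF A smult_carrier_mat[OF one_carrier_mat] v]
    smult_mat_mult_vec[OF one_carrier_mat v] using v by simp

lemma quad_form_minus_smult_one:
  assumes A: "A \<in> carrier_mat n n" and v: "v \<in> carrier_vec n"
  shows "quad_form (A - complex_of_real c \<cdot>\<^sub>m 1\<^sub>m n) v = quad_form A v - c * sq_norm v"
proof -
  have "conjugate v \<bullet> ((A - complex_of_real c \<cdot>\<^sub>m 1\<^sub>m n) *\<^sub>v v) =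
      conjugate v \<bullet> (A *\<^sub>v v) - conjugate v \<bullet> (complex_of_real c \<cdot>\<^sub>v v)"
    unfolding minus_smult_one_mult_vec[OF A v]
    by (rule scalar_prod_minus_distrib[OF _ mult_mat_vec_carrier[OF A v]]) (use v in simp_all)
  then show ?thesis
    using v by simp
qed

lemma hermitian_minus_smult_one:
  assumes A: "A \<in> carrier_mat n n" and herm: "mat_adjoint A = A"
  shows "mat_adjoint (A - complex_of_real c \<cdot>\<^sub>m 1\<^sub>m n) = A - complex_of_real c \<cdot>\<^sub>m 1\<^sub>m n"
proof (rule eq_matI)
  fix i j
  assume "i < dim_row (A - complex_of_real c \<cdot>\<^sub>m 1\<^sub>m n)"
    and "j < dim_col (A - complex_of_real c \<cdot>\<^sub>m 1\<^sub>m n)"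
  with A have i: "i < n" and j: "j < n" by auto
  have "A $$ (i, j) = cnj (A $$ (j, i))"
    using index_mat_adjoint[of i A j] i j A herm by simp
  with i j A show "mat_adjoint (A - complex_of_real c \<cdot>\<^sub>m 1\<^sub>m n) $$ (i, j) =
      (A - complex_of_real c \<cdot>\<^sub>m 1\<^sub>m n) $$ (i, j)"
    by simp
qed (use A in simp_all)

(* A - mu is positive semidefinite and its quadratic form vanishes at x. *)
lemma eigenvector_of_attained_quad_form_bound:
  assumes A: "A \<in> carrier_mat n n" and herm: "mat_adjoint A = A" and x: "x \<in> carrier_vec n"
    and lower: "\<And>v. v \<in> carrier_vec n \<Longrightarrow> \<mu> * sq_norm v \<le> quad_form A v"
    and attained: "quad_form A x = \<mu> * sq_norm x"
  shows "A *\<^sub>v x = complex_of_real \<mu> \<cdot>\<^sub>v x"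
proof -
  define C where "C = A - complex_of_real \<mu> \<cdot>\<^sub>m 1\<^sub>m n"
  have "C \<in> carrier_mat n n"
    unfolding C_def using minus_carrier_mat[OF smult_carrier_mat[OF one_carrier_mat]] .
  moreover have "mat_adjoint C = C"
    unfolding C_def by (rule hermitian_minus_smult_one[OF A herm])
  moreover have "0 \<le> quad_form C v" if "v \<in> carrier_vec n" for v
    unfolding C_def quad_form_minus_smult_one[OF A that] using lower[OF that] by simp
  ultimately have "psd_mat n C"
    unfolding psd_mat_iff_quad_form by blast
  then have "C *\<^sub>v x = 0\<^sub>v n"
    by (rule psd_mat_kernel_of_quad_form_eq_0[OF _ x])
      (simp add: C_def quad_form_minus_smult_one[OF A x] attained)
  then have "A *\<^sub>v x - complex_of_real \<mu> \<cdot>\<^sub>v x = 0\<^sub>v n"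
    unfolding C_def minus_smult_one_mult_vec[OF A x] .
  show ?thesis
  proof (rule eq_vecI)
    fix i assume "i < dim_vec (complex_of_real \<mu> \<cdot>\<^sub>v x)"
    with x have i: "i < n" by simp
    with \<open>A *\<^sub>v x - complex_of_real \<mu> \<cdot>\<^sub>v x = 0\<^sub>v n\<close>
    have "(A *\<^sub>v x - complex_of_real \<mu> \<cdot>\<^sub>v x) $ i = 0" by simp
    with i A x show "(A *\<^sub>v x) $ i = (complex_of_real \<mu> \<cdot>\<^sub>v x) $ i" by simp
  qed (use A x in simp)
qed

lemma hermitian_min_eigenvalue:
  assumes A: "A \<in> carrier_mat n n" and herm: "mat_adjoint A = A" and n: "0 < n"
  shows "\<exists>\<mu>. eigenvalue A (complex_of_real \<mu>) \<and>
    (\<forall>v \<in> carrier_vec n. \<mu> * sq_norm v \<le> quad_form A v)"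
proof -
  obtain x where x: "x \<in> carrier_vec n" and x_norm: "sq_norm x = 1"
    and x_min: "\<And>w. w \<in> carrier_vec n \<Longrightarrow> sq_norm w = 1 \<Longrightarrow> quad_form A x \<le> quad_form A w"
    using quad_form_attains_min_on_unit_sphere[OF A n] by blast
  define \<mu> where "\<mu> = quad_form A x"
  have lower: "\<mu> * sq_norm v \<le> quad_form A v" if "v \<in> carrier_vec n" for v
    unfolding \<mu>_def using quad_form_lower_bound_of_unit_sphere[OF A x_min that] .
  have "quad_form A x = \<mu> * sq_norm x"
    using x_norm unfolding \<mu>_def by simp
  then have "A *\<^sub>v x = complex_of_real \<mu> \<cdot>\<^sub>v x"
    using eigenvector_of_attained_quad_form_bound[OF A herm x] lower by blast
  moreover have "x \<noteq> 0\<^sub>v n"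
    using x_norm sq_norm_eq_0_iff[OF x] by auto
  ultimately have "eigenvalue A (complex_of_real \<mu>)"
    unfolding eigenvalue_def eigenvector_def using x A by auto
  with lower show ?thesis
    by blast
qed

lemma hermitian_max_eigenvalue:
  assumes A: "A \<in> carrier_mat n n" and herm: "mat_adjoint A = A" and n: "0 < n"
  shows "\<exists>M. eigenvalue A (complex_of_real M) \<and>
    (\<forall>v \<in> carrier_vec n. quad_form A v \<le> M * sq_norm v)"
proof -
  define B where "B = (- 1) \<cdot>\<^sub>m A"
  have B: "B \<in> carrier_mat n n"
    unfolding B_def using A by simp
  have "mat_adjoint B = B"
    unfolding B_def mat_adjoint_smult herm by simp
  then obtain \<nu> where "eigenvalue B (complex_of_real \<nu>)"
    and \<nu>_min: "\<And>v. v \<in> carrier_vec n \<Longrightarrow> \<nu> * sq_norm v \<le> quad_form B v"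
    using hermitian_min_eigenvalue[OF B _ n] by blast
  then obtain x where x: "eigenvector B x (complex_of_real \<nu>)"
    unfolding eigenvalue_def by blast
  have Bv: "B *\<^sub>v v = (- 1) \<cdot>\<^sub>v (A *\<^sub>v v)" if "v \<in> carrier_vec n" for v
    unfolding B_def using smult_mat_mult_vec[OF A that] .
  have "eigenvector A x (complex_of_real (- \<nu>))"
  proof -
    have xn: "x \<in> carrier_vec n" and "x \<noteq> 0\<^sub>v n" and Bx: "B *\<^sub>v x = complex_of_real \<nu> \<cdot>\<^sub>v x"
      using x B unfolding eigenvector_def by auto
    moreover have "A *\<^sub>v x = (- 1) \<cdot>\<^sub>v (B *\<^sub>v x)"
      unfolding Bv[OF xn] by (simp add: smult_smult_assoc)
    ultimately show ?thesis
      unfolding eigenvector_def using A by (simp add: smult_smult_assoc)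
  qed
  moreover have "quad_form A v \<le> - \<nu> * sq_norm v" if v: "v \<in> carrier_vec n" for v
    using \<nu>_min[OF v] A v unfolding Bv[OF v] by (simp add: carrier_matD)
  ultimately show ?thesis
    unfolding eigenvalue_def by (metis of_real_minus)
qed

lemma eigenvector_quad_form:
  assumes A: "A \<in> carrier_mat n n" and ev: "eigenvector A v (complex_of_real \<mu>)"
  shows "quad_form A v = \<mu> * sq_norm v" and "0 < sq_norm v"
proof -
  have v: "v \<in> carrier_vec n" and v0: "v \<noteq> 0\<^sub>v n" and Av: "A *\<^sub>v v = complex_of_real \<mu> \<cdot>\<^sub>v v"
    using ev A unfolding eigenvector_def by auto
  show "quad_form A v = \<mu> * sq_norm v"
    unfolding Av using v by simp
  show "0 < sq_norm v"
    using sq_norm_ge_0[OF v] sq_norm_eq_0_iff[OF v] v0 by linarith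
qed

lemma finite_nonzero_real_eigenvalues:
  assumes "A \<in> carrier_mat n n"
  shows "finite {x :: real. x \<noteq> 0 \<and> eigenvalue A (complex_of_real x)}"
proof (rule finite_subset)
  show "{x :: real. x \<noteq> 0 \<and> eigenvalue A (complex_of_real x)} \<subseteq> complex_of_real -` spectrum A"
    unfolding spectrum_def by auto
  show "finite (complex_of_real -` spectrum A)"
    by (rule finite_vimageI[OF card_finite_spectrum(1)[OF assms]]) (simp add: inj_on_def)
qed

lemma lambda_min_eqI:
  assumes A: "A \<in> carrier_mat n n" and ev: "eigenvalue A (complex_of_real \<mu>)" and "\<mu> \<noteq> 0"
    and lower: "\<And>v. v \<in> carrier_vec n \<Longrightarrow> \<mu> * sq_norm v \<le> quad_form A v"
  shows "lambda_min A = \<mu>"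
  unfolding lambda_min_def
proof (rule Min_eqI[OF finite_nonzero_real_eigenvalues[OF A]])
  fix s assume "s \<in> {x. x \<noteq> 0 \<and> eigenvalue A (complex_of_real x)}"
  then obtain w where w: "eigenvector A w (complex_of_real s)"
    unfolding eigenvalue_def by auto
  then have "w \<in> carrier_vec n"
    using A unfolding eigenvector_def by auto
  then have "\<mu> * sq_norm w \<le> s * sq_norm w"
    using lower eigenvector_quad_form(1)[OF A w] by metis
  then show "\<mu> \<le> s"
    using eigenvector_quad_form(2)[OF A w] by simp
qed (use ev \<open>\<mu> \<noteq> 0\<close> in simp)

lemma lambda_min_pd_mat:
  assumes pd: "pd_mat n A" and n: "0 < n"
  shows "0 < lambda_min A"
    and "\<And>v. v \<in> carrier_vec n \<Longrightarrow> lambda_min A * sq_norm v \<le> quad_form A v"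
proof -
  have A: "A \<in> carrier_mat n n" and herm: "mat_adjoint A = A"
    and pos: "\<And>v. v \<in> carrier_vec n \<Longrightarrow> v \<noteq> 0\<^sub>v n \<Longrightarrow> 0 < conjugate v \<bullet> (A *\<^sub>v v)"
    using pd unfolding pd_mat_def by auto
  obtain \<mu> where ev: "eigenvalue A (complex_of_real \<mu>)"
    and lower: "\<And>v. v \<in> carrier_vec n \<Longrightarrow> \<mu> * sq_norm v \<le> quad_form A v"
    using hermitian_min_eigenvalue[OF A herm n] by blast
  obtain x where x: "eigenvector A x (complex_of_real \<mu>)"
    using ev unfolding eigenvalue_def by blast
  have "x \<in> carrier_vec n" "x \<noteq> 0\<^sub>v n"
    using x A unfolding eigenvector_def by auto
  then have "0 < quad_form A x"
    using pos by (simp add: less_complex_def)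
  then have \<mu>_pos: "0 < \<mu>"
    using eigenvector_quad_form[OF A x] by (simp add: zero_less_mult_iff)
  then have "lambda_min A = \<mu>"
    using lambda_min_eqI[OF A ev _ lower] by simp
  with \<mu>_pos lower show "0 < lambda_min A"
    and "\<And>v. v \<in> carrier_vec n \<Longrightarrow> lambda_min A * sq_norm v \<le> quad_form A v"
    by auto
qed

(* When all eigenvalues of B vanish, lambda_max B is the maximum of the empty set, about which
   nothing is known; the hypothesis 0 <= mu covers that case. *)
lemma quad_form_le_lambda_max:
  assumes psd: "psd_mat n B" and n: "0 < n" and \<mu>: "0 \<le> \<mu>" "lambda_max B \<le> \<mu>"
    and v: "v \<in> carrier_vec n"
  shows "quad_form B v \<le> \<mu> * sq_norm v"
proof -
  have B: "B \<in> carrier_mat n n" and herm: "mat_adjoint B = B"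
    using psd unfolding psd_mat_def by auto
  obtain M where ev: "eigenvalue B (complex_of_real M)"
    and bound: "\<And>v. v \<in> carrier_vec n \<Longrightarrow> quad_form B v \<le> M * sq_norm v"
    using hermitian_max_eigenvalue[OF B herm n] by blast
  have "M \<le> \<mu>"
  proof (cases "M = 0")
    case False
    then have "M \<le> lambda_max B"
      unfolding lambda_max_def using ev finite_nonzero_real_eigenvalues[OF B] by (intro Max_ge) auto
    with \<mu> show ?thesis by simp
  qed (use \<mu> in simp)
  then have "M * sq_norm v \<le> \<mu> * sq_norm v"
    using sq_norm_ge_0[OF v] by (rule mult_right_mono)
  with bound[OF v] show ?thesis by simp
qed

section \<open>Two-by-two block matrices\<close>

lemma conjugate_append_vec: "conjugate (x @\<^sub>v y) = conjugate x @\<^sub>v conjugate (y :: complex vec)"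
  unfolding append_vec_def Let_def by (rule eq_vecI) simp_all

lemma cscalar_prod_four_block_mat:
  assumes H: "H \<in> carrier_mat n n" and C: "C \<in> carrier_mat n n"
    and x: "x \<in> carrier_vec n" and y: "y \<in> carrier_vec n"
  shows "conjugate (x @\<^sub>v y) \<bullet> (four_block_mat H C C H *\<^sub>v (x @\<^sub>v y)) =
    conjugate x \<bullet> (H *\<^sub>v x) + conjugate x \<bullet> (C *\<^sub>v y)
    + conjugate y \<bullet> (C *\<^sub>v x) + conjugate y \<bullet> (H *\<^sub>v (y :: complex vec))"
proof -
  have Hx: "H *\<^sub>v x \<in> carrier_vec n" and Cy: "C *\<^sub>v y \<in> carrier_vec n"
    and Cx: "C *\<^sub>v x \<in> carrier_vec n" and Hy: "H *\<^sub>v y \<in> carrier_vec n"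
    using mult_mat_vec_carrier H C x y by blast+
  have "conjugate (x @\<^sub>v y) \<bullet> (four_block_mat H C C H *\<^sub>v (x @\<^sub>v y)) =
      conjugate x \<bullet> (H *\<^sub>v x + C *\<^sub>v y) + conjugate y \<bullet> (C *\<^sub>v x + H *\<^sub>v y)"
    unfolding four_block_mat_mult_vec[OF H C C H x y] conjugate_append_vec
    by (rule scalar_prod_append[of _ n _ n]) (use x y Hx Cy Cx Hy in simp_all)
  also have "\<dots> = conjugate x \<bullet> (H *\<^sub>v x) + conjugate x \<bullet> (C *\<^sub>v y)
      + conjugate y \<bullet> (C *\<^sub>v x) + conjugate y \<bullet> (H *\<^sub>v y)"
    using scalar_prod_add_distrib[OF carrier_vec_conjugate[OF x] Hx Cy]
      scalar_prod_add_distrib[OF carrier_vec_conjugate[OF y] Cx Hy] by simp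
  finally show ?thesis .
qed

lemma psd_four_block_half:
  assumes A: "psd_mat n A" and C: "psd_mat n C"
    and dominated: "\<And>x. x \<in> carrier_vec n \<Longrightarrow> quad_form C x \<le> quad_form A x / 2"
  shows "psd_mat (n + n) (four_block_mat ((1/2) \<cdot>\<^sub>m A) C (mat_adjoint C) ((1/2) \<cdot>\<^sub>m A))"
proof -
  have An: "A \<in> carrier_mat n n" and herm_A: "mat_adjoint A = A"
    and Cn: "C \<in> carrier_mat n n" and herm_C: "mat_adjoint C = C"
    and C_nonneg: "\<And>v. v \<in> carrier_vec n \<Longrightarrow> 0 \<le> quad_form C v"
    using A C unfolding psd_mat_iff_quad_form by auto
  define H where "H = (1/2 :: complex) \<cdot>\<^sub>m A"
  have Hn: "H \<in> carrier_mat n n"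
    unfolding H_def using An by simp
  have quad_H: "quad_form H x = quad_form A x / 2" if "x \<in> carrier_vec n" for x
    unfolding H_def using quad_form_smult_mat_real[OF An that, of "1/2"] by simp
  define M where "M = four_block_mat H C C H"
  have "0 \<le> quad_form M v" if v: "v \<in> carrier_vec (n + n)" for v
  proof -
    define x where "x = vec_first v n"
    define y where "y = vec_last v n"
    have x: "x \<in> carrier_vec n" and y: "y \<in> carrier_vec n"
      unfolding x_def y_def by simp_all
    have v_xy: "v = x @\<^sub>v y"
      unfolding x_def y_def using vec_first_last_append[OF v] by simp
    have "quad_form M v = quad_form H x + quad_form H y + quad_form C (x + y)
        - quad_form C x - quad_form C y"
      unfolding M_def v_xy cscalar_prod_four_block_mat[OF Hn Cn x y]
        cscalar_prod_add_mat_vec_add[OF Cn x y]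
      by simp
    also have "\<dots> \<ge> quad_form C (x + y)"
      using dominated[OF x] dominated[OF y] quad_H[OF x] quad_H[OF y] by simp
    finally show ?thesis
      using C_nonneg[of "x + y"] x y by simp
  qed
  moreover have "M \<in> carrier_mat (n + n) (n + n)"
    unfolding M_def using Hn by simp
  moreover have "mat_adjoint M = M"
    unfolding M_def mat_adjoint_four_block_mat[OF Hn Cn Cn Hn] herm_C
    by (simp add: H_def mat_adjoint_smult herm_A)
  ultimately show ?thesis
    unfolding psd_mat_iff_quad_form M_def H_def herm_C by blast
qed

lemma sum_atLeastLessThan_block:
  fixes m b :: nat
  shows "(\<Sum>k \<in> {m * b..<m * b + b}. g k) = (\<Sum>q<b. g (m * b + q))"
proof -
  have "(\<Sum>k \<in> {m * b..<m * b + b}. g k) = (\<Sum>k \<in> {0 + m * b..<b + m * b}. g k)"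
    by (simp add: add.commute)
  also have "\<dots> = (\<Sum>q \<in> {0..<b}. g (q + m * b))"
    by (rule sum.shift_bounds_nat_ivl)
  finally show ?thesis
    by (simp add: atLeast0LessThan add.commute)
qed

lemma sum_lessThan_double:
  fixes n :: nat
  shows "(\<Sum>k<n + n. g k) = (\<Sum>k<n. g k) + (\<Sum>k<n. g (n + k))"
proof -
  have "(\<Sum>k<n + n. g k) = (\<Sum>k \<in> {0..<n}. g k) + (\<Sum>k \<in> {n..<n + n}. g k)"
    by (simp add: atLeast0LessThan[symmetric] sum.atLeastLessThan_concat)
  also have "(\<Sum>k \<in> {n..<n + n}. g k) = (\<Sum>k<n. g (n + k))"
    using sum_atLeastLessThan_block[where m = 1 and b = n and g = g] by simp
  finally show ?thesis
    by (simp add: atLeast0LessThan)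
qed

lemma mtrace_smult: "A \<in> carrier_mat n n \<Longrightarrow> mtrace (c \<cdot>\<^sub>m A) = c * mtrace A"
  unfolding mtrace_def by (simp add: sum_distrib_left)

lemma mtrace_four_block_mat:
  assumes A: "A \<in> carrier_mat n n" and D: "D \<in> carrier_mat n n"
  shows "mtrace (four_block_mat A B C D) = mtrace A + mtrace D"
proof -
  have "mtrace (four_block_mat A B C D) = (\<Sum>k<n + n. four_block_mat A B C D $$ (k, k))"
    unfolding mtrace_def using A D by simp
  also have "\<dots> = (\<Sum>k<n. four_block_mat A B C D $$ (k, k))
      + (\<Sum>k<n. four_block_mat A B C D $$ (n + k, n + k))"
    by (rule sum_lessThan_double)
  also have "\<dots> = mtrace A + mtrace D"
    unfolding mtrace_def using A D by simp
  finally show ?thesis .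
qed

lemma density_four_block_half:
  assumes A: "density_mat n A" and C: "psd_mat n C"
    and dominated: "\<And>x. x \<in> carrier_vec n \<Longrightarrow> quad_form C x \<le> quad_form A x / 2"
  shows "density_mat (n + n) (four_block_mat ((1/2) \<cdot>\<^sub>m A) C (mat_adjoint C) ((1/2) \<cdot>\<^sub>m A))"
proof -
  have A_psd: "psd_mat n A" and An: "A \<in> carrier_mat n n" and "mtrace A = 1"
    using A unfolding density_mat_def psd_mat_def by auto
  have H: "(1/2) \<cdot>\<^sub>m A \<in> carrier_mat n n"
    using An by simp
  have "mtrace (four_block_mat ((1/2) \<cdot>\<^sub>m A) C (mat_adjoint C) ((1/2) \<cdot>\<^sub>m A)) = 1"
    unfolding mtrace_four_block_mat[OF H H] mtrace_smult[OF An] \<open>mtrace A = 1\<close> by simp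
  with psd_four_block_half[OF A_psd C dominated] show ?thesis
    unfolding density_mat_def by simp
qed

lemma density_four_block_half_diag:
  assumes A: "density_mat n A"
  shows "density_mat (n + n) (four_block_mat ((1/2) \<cdot>\<^sub>m A) (0\<^sub>m n n) (0\<^sub>m n n) ((1/2) \<cdot>\<^sub>m A))"
proof -
  have "quad_form (0\<^sub>m n n) x \<le> quad_form A x / 2" if x: "x \<in> carrier_vec n" for x
    using A x
    unfolding density_mat_def psd_mat_iff_quad_form cscalar_prod_mat_vec_sum[OF zero_carrier_mat x x]
    by simp
  then show ?thesis
    using density_four_block_half[OF A psd_mat_zero] by simp
qed

lemma quad_form_le_half_of_eigenvalue_ratio:
  assumes A: "pd_mat n A" and B: "psd_mat n B" and n: "0 < n" and \<eta>: "0 < \<eta>"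
    and ratio: "2 * lambda_max B / lambda_min A \<le> \<eta>" and x: "x \<in> carrier_vec n"
  shows "quad_form (complex_of_real (1 / \<eta>) \<cdot>\<^sub>m B) x \<le> quad_form A x / 2"
proof -
  have Bn: "B \<in> carrier_mat n n"
    using B unfolding psd_mat_def by blast
  have lambda_pos: "0 < lambda_min A"
    by (rule lambda_min_pd_mat(1)[OF A n])
  have "lambda_max B \<le> \<eta> * lambda_min A / 2"
    using ratio lambda_pos by (simp add: divide_le_eq mult.commute)
  moreover have "0 \<le> \<eta> * lambda_min A / 2"
    using \<eta> lambda_pos by simp
  ultimately have "quad_form B x \<le> \<eta> * lambda_min A / 2 * sq_norm x"
    using quad_form_le_lambda_max[OF B n _ _ x] by blast
  also have "\<dots> = \<eta> / 2 * (lambda_min A * sq_norm x)"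
    by simp
  also have "\<dots> \<le> \<eta> / 2 * quad_form A x"
    using lambda_min_pd_mat(2)[OF A n x] \<eta> by (simp add: mult_left_mono)
  finally have "quad_form B x / \<eta> \<le> quad_form A x / 2"
    using \<eta> by (simp add: divide_le_eq mult.commute)
  then show ?thesis
    unfolding quad_form_smult_mat_real[OF Bn x] by simp
qed

lemma density_four_block_of_eigenvalue_ratio:
  assumes A: "density_mat n A" "pd_mat n A" and B: "psd_mat n B" and n: "0 < n"
    and \<eta>: "0 < \<eta>" and ratio: "2 * lambda_max B / lambda_min A \<le> \<eta>"
  shows "density_mat (n + n) (four_block_mat ((1/2) \<cdot>\<^sub>m A) (complex_of_real (1 / \<eta>) \<cdot>\<^sub>m B)
    (complex_of_real (1 / \<eta>) \<cdot>\<^sub>m mat_adjoint B) ((1/2) \<cdot>\<^sub>m A))"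
proof -
  have "psd_mat n (complex_of_real (1 / \<eta>) \<cdot>\<^sub>m B)"
    by (rule psd_mat_smult[OF B]) (use \<eta> in simp)
  from density_four_block_half[OF A(1) this
      quad_form_le_half_of_eigenvalue_ratio[OF A(2) B n \<eta> ratio]]
  show ?thesis
    unfolding mat_adjoint_smult by simp
qed

section \<open>Kronecker products, Pauli operators and permutation matrices\<close>

lemma sum_lessThan_mult_div_mod:
  fixes a b :: nat
  shows "(\<Sum>k<a * b. f (k div b) (k mod b)) = (\<Sum>p<a. \<Sum>q<b. f p q)"
proof -
  have "(\<Sum>k<a * b. f (k div b) (k mod b)) = (\<Sum>m<a. \<Sum>k \<in> {m * b..<m * b + b}. f (k div b) (k mod b))"
    by (rule sum.nat_group[symmetric])
  also have "\<dots> = (\<Sum>m<a. \<Sum>q<b. f ((m * b + q) div b) ((m * b + q) mod b))"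
    by (simp only: sum_atLeastLessThan_block)
  also have "\<dots> = (\<Sum>p<a. \<Sum>q<b. f p q)"
    by (intro sum.cong refl) simp
  finally show ?thesis .
qed

lemma mod_less_of_less_mult: "(i :: nat) < a * b \<Longrightarrow> i mod b < b"
  by (metis mod_less_divisor mult_0_right neq0_conv not_less_zero)

lemma dim_kron [simp]:
  "dim_row (kron A B) = dim_row A * dim_row B" "dim_col (kron A B) = dim_col A * dim_col B"
  unfolding kron_def by simp_all

lemma index_kron:
  "i < dim_row A * dim_row B \<Longrightarrow> j < dim_col A * dim_col B \<Longrightarrow>
    kron A B $$ (i, j) = A $$ (i div dim_row B, j div dim_col B) * B $$ (i mod dim_row B, j mod dim_col B)"
  unfolding kron_def by simp

lemma kron_carrier_mat:
  "A \<in> carrier_mat a1 a2 \<Longrightarrow> B \<in> carrier_mat b1 b2 \<Longrightarrow> kron A B \<in> carrier_mat (a1 * b1) (a2 * b2)"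
  by (intro carrier_matI) (simp_all add: carrier_matD)

lemma kron_mult:
  assumes A: "A \<in> carrier_mat a1 a2" and B: "B \<in> carrier_mat b1 b2"
    and C: "C \<in> carrier_mat a2 a3" and D: "D \<in> carrier_mat b2 b3"
  shows "kron A B * kron C D = kron (A * C) (B * D)"
proof (rule eq_matI)
  have dims: "dim_row A = a1" "dim_col A = a2" "dim_row B = b1" "dim_col B = b2"
    "dim_row C = a2" "dim_col C = a3" "dim_row D = b2" "dim_col D = b3"
    using A B C D by auto
  fix i j
  assume "i < dim_row (kron (A * C) (B * D))" and "j < dim_col (kron (A * C) (B * D))"
  then have i: "i < a1 * b1" and j: "j < a3 * b3"
    using dims by auto
  have "(kron A B * kron C D) $$ (i, j) = (\<Sum>k<a2 * b2. kron A B $$ (i, k) * kron C D $$ (k, j))"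
    using i j dims by (simp add: scalar_prod_def atLeast0LessThan)
  also have "\<dots> = (\<Sum>k<a2 * b2. (A $$ (i div b1, k div b2) * C $$ (k div b2, j div b3)) *
      (B $$ (i mod b1, k mod b2) * D $$ (k mod b2, j mod b3)))"
    by (intro sum.cong refl) (use i j dims in \<open>simp add: index_kron mult_ac\<close>)
  also have "\<dots> = (\<Sum>p<a2. \<Sum>q<b2. (A $$ (i div b1, p) * C $$ (p, j div b3)) *
      (B $$ (i mod b1, q) * D $$ (q, j mod b3)))"
    by (rule sum_lessThan_mult_div_mod)
  also have "\<dots> = (\<Sum>p<a2. A $$ (i div b1, p) * C $$ (p, j div b3)) *
      (\<Sum>q<b2. B $$ (i mod b1, q) * D $$ (q, j mod b3))"
    by (simp add: sum_product)
  also have "\<dots> = kron (A * C) (B * D) $$ (i, j)"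
    using i j dims less_mult_imp_div_less[OF i] less_mult_imp_div_less[OF j]
      mod_less_of_less_mult[OF i] mod_less_of_less_mult[OF j]
    by (simp add: index_kron scalar_prod_def atLeast0LessThan)
  finally show "(kron A B * kron C D) $$ (i, j) = kron (A * C) (B * D) $$ (i, j)" .
qed simp_all

lemma mat_adjoint_kron: "mat_adjoint (kron A B) = kron (mat_adjoint A) (mat_adjoint B)"
proof (rule eq_matI)
  fix i j
  assume "i < dim_row (kron (mat_adjoint A) (mat_adjoint B))"
    and "j < dim_col (kron (mat_adjoint A) (mat_adjoint B))"
  then have i: "i < dim_col A * dim_col B" and j: "j < dim_row A * dim_row B"
    by auto
  show "mat_adjoint (kron A B) $$ (i, j) = kron (mat_adjoint A) (mat_adjoint B) $$ (i, j)"
    using i j less_mult_imp_div_less[OF i] less_mult_imp_div_less[OF j]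
      mod_less_of_less_mult[OF i] mod_less_of_less_mult[OF j]
    by (simp add: index_kron)
qed simp_all

lemma kron_one_mat: "kron (1\<^sub>m a) (1\<^sub>m b) = 1\<^sub>m (a * b)"
proof (rule eq_matI)
  fix i j
  assume "i < dim_row (1\<^sub>m (a * b) :: complex mat)" and "j < dim_col (1\<^sub>m (a * b) :: complex mat)"
  then have i: "i < a * b" and j: "j < a * b"
    by auto
  have "(i div b = j div b \<and> i mod b = j mod b) \<longleftrightarrow> i = j"
    by (metis div_mult_mod_eq)
  then show "kron (1\<^sub>m a) (1\<^sub>m b) $$ (i, j) = 1\<^sub>m (a * b) $$ (i, j)"
    using i j less_mult_imp_div_less[OF i] less_mult_imp_div_less[OF j]
      mod_less_of_less_mult[OF i] mod_less_of_less_mult[OF j]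
    by (auto simp: index_kron)
qed simp_all

lemma mat2_eqI:
  assumes "dim_row A = 2" "dim_col A = 2" "dim_row B = 2" "dim_col B = 2"
    "A $$ (0, 0) = B $$ (0, 0)" "A $$ (0, 1) = B $$ (0, 1)" "A $$ (1, 0) = B $$ (1, 0)" "A $$ (1, 1) = B $$ (1, 1)"
  shows "A = (B :: complex mat)"
proof (rule eq_matI)
  fix i j assume "i < dim_row B" "j < dim_col B"
  with assms(3,4) have "i = 0 \<or> i = 1" "j = 0 \<or> j = 1" by auto
  with assms(5-8) show "A $$ (i, j) = B $$ (i, j)" by auto
qed (use assms in auto)

lemma sum_lessThan_2: "(\<Sum>k<(2 :: nat). f k) = f 0 + (f 1 :: complex)"
  by (simp add: numeral_2_eq_2)

lemma pauli_X_carrier [simp]: "pauli_X \<in> carrier_mat 2 2"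
  unfolding pauli_X_def by simp

lemma pauli_Z_carrier [simp]: "pauli_Z \<in> carrier_mat 2 2"
  unfolding pauli_Z_def by simp

lemma hermitian_pauli_X: "mat_adjoint pauli_X = pauli_X"
  by (rule mat2_eqI) (simp_all add: pauli_X_def)

lemma hermitian_pauli_Z: "mat_adjoint pauli_Z = pauli_Z"
  by (rule mat2_eqI) (simp_all add: pauli_Z_def)

lemma pauli_X_squared: "pauli_X * pauli_X = 1\<^sub>m 2"
  by (rule mat2_eqI) (simp_all add: pauli_X_def scalar_prod_def atLeast0LessThan sum_lessThan_2)

lemma pauli_Z_squared: "pauli_Z * pauli_Z = 1\<^sub>m 2"
  by (rule mat2_eqI) (simp_all add: pauli_Z_def scalar_prod_def atLeast0LessThan sum_lessThan_2)

definition pauli_factor :: "bool \<Rightarrow> bool \<Rightarrow> complex mat" where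
  "pauli_factor a b = (if a then pauli_X else 1\<^sub>m 2) * (if b then pauli_Z else 1\<^sub>m 2)"

lemma isometry_pauli_factor: "isometry_mat 2 2 (pauli_factor a b)"
proof -
  define X where "X = (if a then pauli_X else 1\<^sub>m 2)"
  define Z where "Z = (if b then pauli_Z else 1\<^sub>m 2)"
  have X: "X \<in> carrier_mat 2 2" "mat_adjoint X = X" "X * X = 1\<^sub>m 2"
    unfolding X_def using hermitian_pauli_X pauli_X_squared by auto
  have Z: "Z \<in> carrier_mat 2 2" "mat_adjoint Z = Z" "Z * Z = 1\<^sub>m 2"
    unfolding Z_def using hermitian_pauli_Z pauli_Z_squared by auto
  have "mat_adjoint (pauli_factor a b) * pauli_factor a b = Z * X * (X * Z)"
    unfolding pauli_factor_def X_def[symmetric] Z_def[symmetric] mat_adjoint_mult[OF X(1) Z(1)] X(2) Z(2) ..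
  also have "\<dots> = Z * (X * X) * Z"
    using X(1) Z(1) by (simp add: assoc_mult_mat[of _ 2 2 _ 2 _ 2])
  also have "\<dots> = 1\<^sub>m 2"
    using X(3) Z(3) Z(1) by simp
  finally show ?thesis
    unfolding isometry_mat_def pauli_factor_def X_def[symmetric] Z_def[symmetric]
    using mult_carrier_mat[OF X(1) Z(1)] by simp
qed

lemma isometry_pauli_op:
  "isometry_mat (2 ^ (length ks div 2)) (2 ^ (length ks div 2)) (pauli_op ks)"
proof (induction ks rule: pauli_op.induct)
  case (3 a b ks)
  define n :: nat where "n = 2 ^ (length ks div 2)"
  have P: "pauli_op ks \<in> carrier_mat n n" "mat_adjoint (pauli_op ks) * pauli_op ks = 1\<^sub>m n"
    using "3.IH" unfolding n_def isometry_mat_def by auto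
  have F: "pauli_factor a b \<in> carrier_mat 2 2" "mat_adjoint (pauli_factor a b) * pauli_factor a b = 1\<^sub>m 2"
    using isometry_pauli_factor unfolding isometry_mat_def by auto
  have op: "pauli_op (a # b # ks) = kron (pauli_factor a b) (pauli_op ks)"
    unfolding pauli_factor_def by simp
  have "mat_adjoint (pauli_op (a # b # ks)) * pauli_op (a # b # ks) =
      kron (mat_adjoint (pauli_factor a b) * pauli_factor a b) (mat_adjoint (pauli_op ks) * pauli_op ks)"
    unfolding op mat_adjoint_kron
    by (rule kron_mult) (use F(1) P(1) in auto)
  also have "\<dots> = 1\<^sub>m (2 * n)"
    unfolding F(2) P(2) kron_one_mat ..
  finally show ?case
    unfolding isometry_mat_def n_def op using kron_carrier_mat[OF F(1) P(1)] by (simp add: n_def)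
qed (simp_all add: isometry_mat_def)

lemma isometry_perm_mat:
  assumes \<sigma>: "\<sigma> permutes {..<N}"
  shows "isometry_mat N N (perm_mat N \<sigma>)"
proof -
  have P: "perm_mat N \<sigma> \<in> carrier_mat N N"
    unfolding perm_mat_def by simp
  have "mat_adjoint (perm_mat N \<sigma>) * perm_mat N \<sigma> = 1\<^sub>m N"
  proof (rule eq_matI)
    fix i j assume "i < dim_row (1\<^sub>m N :: complex mat)" "j < dim_col (1\<^sub>m N :: complex mat)"
    then have i: "i < N" and j: "j < N" by auto
    have \<sigma>i: "\<sigma> i < N"
      using permutes_in_image[OF \<sigma>, of i] i by simp
    have \<sigma>_inj: "\<sigma> i = \<sigma> j \<longleftrightarrow> i = j"
      using permutes_inj[OF \<sigma>] by (auto dest: injD)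
    have "(mat_adjoint (perm_mat N \<sigma>) * perm_mat N \<sigma>) $$ (i, j) =
        (\<Sum>k<N. cnj (perm_mat N \<sigma> $$ (k, i)) * perm_mat N \<sigma> $$ (k, j))"
      using i j P by (simp add: scalar_prod_def atLeast0LessThan)
    also have "\<dots> = (\<Sum>k<N. if k = \<sigma> i then (if \<sigma> i = \<sigma> j then 1 else 0) else 0)"
      using i j by (intro sum.cong refl) (auto simp: perm_mat_def)
    also have "\<dots> = 1\<^sub>m N $$ (i, j)"
      using \<sigma>i \<sigma>_inj i j by simp
    finally show "(mat_adjoint (perm_mat N \<sigma>) * perm_mat N \<sigma>) $$ (i, j) = 1\<^sub>m N $$ (i, j)" .
  qed (use P in auto)
  with P show ?thesis
    unfolding isometry_mat_def by simp
qed

lemma iso_V_carrier: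
  assumes "d2 \<le> d1"
  shows "iso_V d1 d2 \<in> carrier_mat (2 ^ d1) (2 ^ d2)"
proof -
  have "iso_V d1 d2 \<in> carrier_mat (2 ^ d2 * 2 ^ (d1 - d2)) (2 ^ d2 * 1)"
    unfolding iso_V_def by (rule kron_carrier_mat) (auto simp: ket0_def)
  moreover have "(2 :: nat) ^ d2 * 2 ^ (d1 - d2) = 2 ^ d1"
    using assms by (simp add: power_add[symmetric])
  ultimately show ?thesis
    by simp
qed

theorem corollary5:
  fixes d1 d2 \<eta> :: nat and \<epsilon> :: real
    and Mo Mc :: "complex mat" and k k' :: "bool list" and \<sigma> :: "nat \<Rightarrow> nat"
  assumes "d1 \<ge> d2" and "d2 \<ge> 1"
    and "\<epsilon> > 0" and "\<eta> > 0" and "1 / real \<eta> < \<epsilon>"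
    and "density_mat (2^d1) Mo" and "pd_mat (2^d1) Mo"
    and "density_mat (2^d2) Mc"
    and "length k = 2 * d1" and "length k' = 2 * d2"
    and "\<sigma> permutes {..<2^(d1+1)}"
  defines "Mo' \<equiv> pauli_op k * Mo * mat_adjoint (pauli_op k)"
    and "Mc' \<equiv> pauli_op k' * Mc * mat_adjoint (pauli_op k')"
  defines "Mc'' \<equiv> iso_V d1 d2 * Mc' * mat_adjoint (iso_V d1 d2)"
  defines "Ma0 \<equiv> four_block_mat ((1/2) \<cdot>\<^sub>m Mo') (0\<^sub>m (2^d1) (2^d1))
                                  (0\<^sub>m (2^d1) (2^d1)) ((1/2) \<cdot>\<^sub>m Mo')"
    and "Ma1 \<equiv> four_block_mat ((1/2) \<cdot>\<^sub>m Mo') (complex_of_real (1 / real \<eta>) \<cdot>\<^sub>m Mc'')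
                  (complex_of_real (1 / real \<eta>) \<cdot>\<^sub>m mat_adjoint Mc'') ((1/2) \<cdot>\<^sub>m Mo')"
  defines "Mf0 \<equiv> perm_mat (2^(d1+1)) \<sigma> * Ma0 * mat_adjoint (perm_mat (2^(d1+1)) \<sigma>)"
    and "Mf1 \<equiv> perm_mat (2^(d1+1)) \<sigma> * Ma1 * mat_adjoint (perm_mat (2^(d1+1)) \<sigma>)"
  assumes "2 * lambda_max Mc'' / lambda_min Mo' \<le> real \<eta>"
  shows "density_mat (2^(d1+1)) Mf0 \<and> density_mat (2^(d1+1)) Mf1"
proof -
  have dims: "0 < (2 :: nat) ^ d1" "(2 :: nat) ^ (d1 + 1) = 2 ^ d1 + 2 ^ d1"
    by simp_all
  have Uk: "isometry_mat (2 ^ d1) (2 ^ d1) (pauli_op k)"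
    using isometry_pauli_op[of k] \<open>length k = 2 * d1\<close> by simp
  have Uk': "isometry_mat (2 ^ d2) (2 ^ d2) (pauli_op k')"
    using isometry_pauli_op[of k'] \<open>length k' = 2 * d2\<close> by simp
  have Mo': "density_mat (2 ^ d1) Mo'" "pd_mat (2 ^ d1) Mo'"
    unfolding Mo'_def using density_mat_congruence[OF \<open>density_mat (2^d1) Mo\<close> Uk]
      pd_mat_congruence[OF \<open>pd_mat (2^d1) Mo\<close> Uk] by auto
  have "psd_mat (2 ^ d2) Mc'"
    using density_mat_congruence[OF \<open>density_mat (2^d2) Mc\<close> Uk']
    unfolding Mc'_def density_mat_def by blast
  then have Mc'': "psd_mat (2 ^ d1) Mc''"
    unfolding Mc''_def using psd_mat_congruence iso_V_carrier[OF \<open>d1 \<ge> d2\<close>] by blast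
  have "density_mat (2 ^ d1 + 2 ^ d1) Ma0"
    unfolding Ma0_def by (rule density_four_block_half_diag[OF Mo'(1)])
  moreover have "density_mat (2 ^ d1 + 2 ^ d1) Ma1"
    unfolding Ma1_def
    by (rule density_four_block_of_eigenvalue_ratio[OF Mo' Mc'' dims(1) _
          \<open>2 * lambda_max Mc'' / lambda_min Mo' \<le> real \<eta>\<close>])
      (use \<open>\<eta> > 0\<close> in simp)
  moreover have "isometry_mat (2 ^ d1 + 2 ^ d1) (2 ^ d1 + 2 ^ d1) (perm_mat (2 ^ (d1 + 1)) \<sigma>)"
    using isometry_perm_mat[OF \<open>\<sigma> permutes {..<2^(d1+1)}\<close>] unfolding dims(2) .
  ultimately show ?thesis
    unfolding Mf0_def Mf1_def dims(2) using density_mat_congruence by blast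
qed

end
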